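(* Let $n\ge3$, $\zeta=2\pi/n$, $m\in[0,n/2]\cap\mathbb{N}$ with $m\ne n/4$, $a>0$, $V$ smooth, and $k\in\{1,\dots,n-1\}$. The matrix $iJB_k$ maps the real subspace $\mathbb{R}\times i\mathbb{R}\subset\mathbb{C}^2$ into itself, and as a real-linear map on this subspace its eigenvalues are $\nu_k^{\pm}=\beta_k\pm\sqrt{\alpha_k^2(1-\phi_k(a))}$. Moreover: (a) if $k\in[1,n-1]\cap\mathbb{N}$ and $\phi_k(a)\in(-\infty,\gamma_k)$, then $\nu_k^+$ is positive; (b) if $k\in[1,n/2)\cap\mathbb{N}$ and $\phi_k(a)\in(\gamma_k,1)$, then $\nu_k^+$ and $\nu_k^-$ are positive.
   Context: $J=\begin{pmatrix}0&-1\\1&0\end{pmatrix}$. $\alpha_k=4\cos(m\zeta)\sin^2(k\zeta/2)$ (nonzero for $k=1,\dots,n-1$ under the assumption $m\ne n/4$), $\beta_k=2\sin(m\zeta)\sin(k\zeta)$, $\phi_k(a)=\frac{2a^2}{\alpha_k}V''(a^2)$, $\gamma_k=1-(\beta_k/\alpha_k)^2$, and $B_k=\mathrm{diag}(2a^2V''(a^2)-\alpha_k,-\alpha_k)+iJ\beta_k=\alpha_k\,\mathrm{diag}(\phi_k(a)-1,-1)+\beta_k\, iJ$. *)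

theory Defs
  imports "HOL-Analysis.Analysis"
begin

definition zeta :: "nat \<Rightarrow> real" where
  "zeta n = 2 * pi / real n"

definition alpha_k :: "nat \<Rightarrow> nat \<Rightarrow> nat \<Rightarrow> real" where
  "alpha_k n m k = 4 * cos (real m * zeta n) * (sin (real k * zeta n / 2))^2"

definition beta_k :: "nat \<Rightarrow> nat \<Rightarrow> nat \<Rightarrow> real" where
  "beta_k n m k = 2 * sin (real m * zeta n) * sin (real k * zeta n)"

definition phi_k :: "nat \<Rightarrow> nat \<Rightarrow> (real \<Rightarrow> real) \<Rightarrow> nat \<Rightarrow> real \<Rightarrow> real" where
  "phi_k n m V k a = 2 * a^2 * deriv (deriv V) (a^2) / alpha_k n m k"

definition gamma_k :: "nat \<Rightarrow> nat \<Rightarrow> nat \<Rightarrow> real" where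
  "gamma_k n m k = 1 - (beta_k n m k / alpha_k n m k)^2"

definition Jmat :: "complex^2^2" where
  "Jmat = vector [vector [0, -1], vector [1, 0]]"

definition Bmat :: "nat \<Rightarrow> nat \<Rightarrow> (real \<Rightarrow> real) \<Rightarrow> nat \<Rightarrow> real \<Rightarrow> complex^2^2" where
  "Bmat n m V k a =
     vector [vector [complex_of_real (2 * a^2 * deriv (deriv V) (a^2) - alpha_k n m k), 0],
             vector [0, complex_of_real (- alpha_k n m k)]]
     + (\<chi> i j. \<i> * complex_of_real (beta_k n m k) * Jmat $ i $ j)"

definition iJB :: "nat \<Rightarrow> nat \<Rightarrow> (real \<Rightarrow> real) \<Rightarrow> nat \<Rightarrow> real \<Rightarrow> complex^2^2" where
  "iJB n m V k a = (\<chi> i j. \<i> * Jmat $ i $ j) ** Bmat n m V k a"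

definition embR :: "real^2 \<Rightarrow> complex^2" where
  "embR v = vector [complex_of_real (v $ 1), \<i> * complex_of_real (v $ 2)]"

text \<open>Real-linear map induced on R x iR (in coordinates (x,y) for (x, i y))\<close>
definition restr_map :: "complex^2^2 \<Rightarrow> real^2 \<Rightarrow> real^2" where
  "restr_map M v = (let w = M *v embR v in vector [Re (w $ 1), Im (w $ 2)])"

definition eigenvalues2 :: "real^2^2 \<Rightarrow> complex set" where
  "eigenvalues2 A = {lam. \<exists>v::complex^2. v \<noteq> 0 \<and>
       (\<chi> i j. complex_of_real (A $ i $ j)) *v v = lam *s v}"

definition nu_plus :: "nat \<Rightarrow> nat \<Rightarrow> (real \<Rightarrow> real) \<Rightarrow> nat \<Rightarrow> real \<Rightarrow> complex" where
  "nu_plus n m V k a = complex_of_real (beta_k n m k)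
     + csqrt (complex_of_real ((alpha_k n m k)^2 * (1 - phi_k n m V k a)))"

definition nu_minus :: "nat \<Rightarrow> nat \<Rightarrow> (real \<Rightarrow> real) \<Rightarrow> nat \<Rightarrow> real \<Rightarrow> complex" where
  "nu_minus n m V k a = complex_of_real (beta_k n m k)
     - csqrt (complex_of_real ((alpha_k n m k)^2 * (1 - phi_k n m V k a)))"

end

theory Submission
  imports Defs
begin

text \<open>With \<open>c = 2a\<^sup>2V''(a\<^sup>2)\<close>, the matrix \<open>iJB\<^sub>k\<close> equals
  \<open>[[\<beta>\<^sub>k, i\<alpha>\<^sub>k], [i(c - \<alpha>\<^sub>k), \<beta>\<^sub>k]]\<close>: its diagonal is real and its off-diagonal
  entries are imaginary, so it preserves \<open>\<real> \<times> i\<real>\<close> and acts there by the real matrix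
  \<open>[[\<beta>\<^sub>k, -\<alpha>\<^sub>k], [c - \<alpha>\<^sub>k, \<beta>\<^sub>k]]\<close>. Its eigenvalues \<open>\<lambda>\<close> solve
  \<open>(\<lambda> - \<beta>\<^sub>k)\<^sup>2 = -\<alpha>\<^sub>k(c - \<alpha>\<^sub>k) = \<alpha>\<^sub>k\<^sup>2(1 - \<phi>\<^sub>k)\<close>. The sign conditions follow by
  comparing this discriminant with \<open>\<beta>\<^sub>k\<^sup>2\<close> (which is how \<open>\<gamma>\<^sub>k\<close> enters) and with \<open>0\<close>, using
  \<open>\<alpha>\<^sub>k \<noteq> 0\<close> and, for \<open>k < n/2\<close>, \<open>\<beta>\<^sub>k \<ge> 0\<close>.\<close>

lemma iJB_eq:
  "iJB n m V k a =
     vector [vector [of_real (beta_k n m k), \<i> * of_real (alpha_k n m k)],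
             vector [\<i> * of_real (2 * a^2 * deriv (deriv V) (a^2) - alpha_k n m k),
                     of_real (beta_k n m k)]]"
  unfolding iJB_def Bmat_def Jmat_def
  by (simp add: vec_eq_iff forall_2 matrix_matrix_mult_def sum_2 algebra_simps)

lemma iJB_preserves_real_times_imaginary:
  assumes "Im (z $ 1) = 0" and "Re (z $ 2) = 0"
  shows "Im ((iJB n m V k a *v z) $ 1) = 0 \<and> Re ((iJB n m V k a *v z) $ 2) = 0"
  using assms by (simp add: iJB_eq matrix_vector_mult_def sum_2)

lemma restr_map_iJB:
  "restr_map (iJB n m V k a) v =
     vector [beta_k n m k * v$1 - alpha_k n m k * v$2,
             (2 * a^2 * deriv (deriv V) (a^2) - alpha_k n m k) * v$1 + beta_k n m k * v$2]"
  unfolding restr_map_def iJB_eq embR_def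
  by (simp add: matrix_vector_mult_def sum_2 Let_def)

lemma linear_restr_map_iJB: "linear (restr_map (iJB n m V k a))"
  unfolding restr_map_iJB
  by (rule linearI) (simp_all add: vec_eq_iff forall_2 algebra_simps)

lemma matrix_restr_map_iJB:
  "matrix (restr_map (iJB n m V k a)) =
     vector [vector [beta_k n m k, - alpha_k n m k],
             vector [2 * a^2 * deriv (deriv V) (a^2) - alpha_k n m k, beta_k n m k]]"
  by (simp add: matrix_def restr_map_iJB vec_eq_iff forall_2 axis_def)

lemma eigenvalues2_equal_diagonal_iff:
  fixes b r q :: real
  assumes "r \<noteq> 0"
  shows "\<mu> \<in> eigenvalues2 (vector [vector [b, r], vector [q, b]]) \<longleftrightarrow>
         (\<mu> - of_real b)^2 = of_real (r * q)"
proof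
  assume "\<mu> \<in> eigenvalues2 (vector [vector [b, r], vector [q, b]])"
  then obtain v :: "complex^2" where "v \<noteq> 0" and
    "(\<chi> i j. complex_of_real ((vector [vector [b, r], vector [q, b]] :: real^2^2) $ i $ j)) *v v
       = \<mu> *s v"
    unfolding eigenvalues2_def by blast
  then have v: "v$1 \<noteq> 0 \<or> v$2 \<noteq> 0"
    and e1: "(of_real b - \<mu>) * v$1 + of_real r * v$2 = 0"
    and e2: "of_real q * v$1 + (of_real b - \<mu>) * v$2 = 0"
    by (auto simp: vec_eq_iff forall_2 matrix_vector_mult_def sum_2 algebra_simps)
  define D where "D = (\<mu> - of_real b)^2 - of_real (r * q)"
  \<comment> \<open>\<open>D\<close> is the determinant of \<open>A - \<mu>I\<close>; multiplying by the adjugate kills \<open>v\<close>.\<close>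
  have "D * v$1 = (of_real b - \<mu>) * ((of_real b - \<mu>) * v$1 + of_real r * v$2)
                  - of_real r * (of_real q * v$1 + (of_real b - \<mu>) * v$2)"
   and "D * v$2 = (of_real b - \<mu>) * (of_real q * v$1 + (of_real b - \<mu>) * v$2)
                  - of_real q * ((of_real b - \<mu>) * v$1 + of_real r * v$2)"
    unfolding D_def by (simp_all add: power2_eq_square algebra_simps)
  with e1 e2 v have "D = 0" by auto
  then show "(\<mu> - of_real b)^2 = of_real (r * q)"
    unfolding D_def by simp
next
  assume char: "(\<mu> - of_real b)^2 = of_real (r * q)"
  define v :: "complex^2" where "v = vector [of_real r, \<mu> - of_real b]"
  have "v \<noteq> 0" using assms by (auto simp: v_def vec_eq_iff forall_2)
  moreover have
    "(\<chi> i j. complex_of_real ((vector [vector [b, r], vector [q, b]] :: real^2^2) $ i $ j)) *v v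
       = \<mu> *s v"
    using char by (simp add: v_def vec_eq_iff forall_2 matrix_vector_mult_def sum_2
                             power2_eq_square algebra_simps)
  ultimately show "\<mu> \<in> eigenvalues2 (vector [vector [b, r], vector [q, b]])"
    unfolding eigenvalues2_def by blast
qed

lemma eigenvalues2_equal_diagonal:
  fixes b r q :: real
  assumes "r \<noteq> 0"
  shows "eigenvalues2 (vector [vector [b, r], vector [q, b]]) =
         {of_real b + csqrt (of_real (r * q)), of_real b - csqrt (of_real (r * q))}"
proof -
  have "(\<mu> - of_real b)^2 = of_real (r * q) \<longleftrightarrow>
        \<mu> - of_real b = csqrt (of_real (r * q)) \<or> \<mu> - of_real b = - csqrt (of_real (r * q))"
    for \<mu>
    using power2_eq_iff[of "\<mu> - of_real b" "csqrt (of_real (r * q))"] by simp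
  then show ?thesis
    using eigenvalues2_equal_diagonal_iff[OF assms] by (auto simp: algebra_simps)
qed

lemma plus_csqrt_real_pos:
  fixes b d :: real
  assumes "b^2 < d"
  shows "of_real b + csqrt (of_real d) \<in> \<real> \<and> 0 < Re (of_real b + csqrt (of_real d))"
proof -
  have "0 \<le> d" using assms zero_le_power2[of b] by linarith
  moreover have "\<bar>b\<bar> < sqrt d"
    using real_sqrt_less_mono[OF assms] by simp
  ultimately show ?thesis by (auto simp: csqrt_of_real)
qed

lemma plus_minus_csqrt_real_pos:
  fixes b d :: real
  assumes "0 < d" and "d < b^2" and "0 \<le> b"
  shows "of_real b + csqrt (of_real d) \<in> \<real> \<and> 0 < Re (of_real b + csqrt (of_real d))"
    and "of_real b - csqrt (of_real d) \<in> \<real> \<and> 0 < Re (of_real b - csqrt (of_real d))"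
proof -
  have "sqrt d < b"
    using real_sqrt_less_mono[OF assms(2)] assms(3) by simp
  moreover have "0 < sqrt d" using assms(1) by simp
  moreover have "csqrt (of_real d) = of_real (sqrt d)" using assms(1) by (simp add: csqrt_of_real)
  ultimately show "of_real b + csqrt (of_real d) \<in> \<real> \<and> 0 < Re (of_real b + csqrt (of_real d))"
    and "of_real b - csqrt (of_real d) \<in> \<real> \<and> 0 < Re (of_real b - csqrt (of_real d))"
    by (simp_all del: real_sqrt_gt_0_iff)
qed

lemma mult_zeta_bounds:
  assumes "0 < n" and "real j \<le> real n / 2"
  shows "0 \<le> real j * zeta n" and "real j * zeta n \<le> pi"
proof -
  have angle: "real j * zeta n = pi * (2 * real j / real n)"
    by (simp add: zeta_def)
  have "2 * real j / real n \<le> 1"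
    using assms by (simp add: field_simps)
  from mult_left_le[OF this pi_ge_zero] show "real j * zeta n \<le> pi"
    unfolding angle .
  show "0 \<le> real j * zeta n"
    unfolding angle by simp
qed

lemma alpha_k_nonzero:
  assumes "0 < n" and "real m \<le> real n / 2" and "real m \<noteq> real n / 4"
    and "1 \<le> k" and "k < n"
  shows "alpha_k n m k \<noteq> 0"
proof -
  have "cos (real m * zeta n) \<noteq> 0"
  proof
    assume "cos (real m * zeta n) = 0"
    then have "real m * zeta n = pi / 2"
      using cos_inj_pi[of "real m * zeta n" "pi / 2"] mult_zeta_bounds[OF assms(1,2)] by simp
    then show False
      using assms(1,3) by (simp add: zeta_def field_simps)
  qed
  moreover have "sin (real k * zeta n / 2) > 0"
  proof -
    have angle: "real k * zeta n / 2 = pi * (real k / real n)"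
      by (simp add: zeta_def)
    have "0 < real k / real n" and "real k / real n < 1"
      using assms(1,4,5) by simp_all
    then show ?thesis
      unfolding angle
      using mult_pos_pos[OF pi_gt_zero] mult_strict_left_mono[OF _ pi_gt_zero]
      by (intro sin_gt_zero) fastforce+
  qed
  ultimately show ?thesis by (simp add: alpha_k_def)
qed

lemma beta_k_nonneg:
  assumes "0 < n" and "real m \<le> real n / 2" and "real k \<le> real n / 2"
  shows "0 \<le> beta_k n m k"
  using sin_ge_zero[OF mult_zeta_bounds[OF assms(1,2)]]
        sin_ge_zero[OF mult_zeta_bounds[OF assms(1,3)]]
  by (simp add: beta_k_def)

lemma alpha_sq_one_minus_phi:
  assumes "alpha_k n m k \<noteq> 0"
  shows "(alpha_k n m k)^2 * (1 - phi_k n m V k a)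
         = - alpha_k n m k * (2 * a^2 * deriv (deriv V) (a^2) - alpha_k n m k)"
  using assms by (simp add: phi_k_def field_simps power2_eq_square)

lemma less_one_minus_ratio_sq_iff:
  fixes x y p :: real
  assumes "x \<noteq> 0"
  shows "p < 1 - (y / x)^2 \<longleftrightarrow> y^2 < x^2 * (1 - p)"
    and "1 - (y / x)^2 < p \<longleftrightarrow> x^2 * (1 - p) < y^2"
proof -
  have pos: "0 < x^2" using assms by simp
  have scaled: "x^2 * (1 - (y / x)^2) = x^2 - y^2"
    using assms by (simp add: field_simps)
  have "p < 1 - (y / x)^2 \<longleftrightarrow> x^2 * p < x^2 * (1 - (y / x)^2)"
   and "1 - (y / x)^2 < p \<longleftrightarrow> x^2 * (1 - (y / x)^2) < x^2 * p"
    using pos by simp_all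
  then show "p < 1 - (y / x)^2 \<longleftrightarrow> y^2 < x^2 * (1 - p)"
    and "1 - (y / x)^2 < p \<longleftrightarrow> x^2 * (1 - p) < y^2"
    unfolding scaled by (simp_all add: algebra_simps)
qed

lemma eigenvalues2_restr_map_iJB:
  assumes "alpha_k n m k \<noteq> 0"
  shows "eigenvalues2 (matrix (restr_map (iJB n m V k a))) = {nu_plus n m V k a, nu_minus n m V k a}"
  unfolding matrix_restr_map_iJB nu_plus_def nu_minus_def alpha_sq_one_minus_phi[OF assms]
  by (rule eigenvalues2_equal_diagonal) (simp add: assms)

lemma nu_plus_real_pos:
  assumes "alpha_k n m k \<noteq> 0" and "phi_k n m V k a < gamma_k n m k"
  shows "nu_plus n m V k a \<in> \<real> \<and> 0 < Re (nu_plus n m V k a)"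
  using assms(2) plus_csqrt_real_pos
  unfolding nu_plus_def gamma_k_def less_one_minus_ratio_sq_iff(1)[OF assms(1)] by blast

lemma nu_plus_nu_minus_real_pos:
  assumes "alpha_k n m k \<noteq> 0" and "0 \<le> beta_k n m k"
    and "gamma_k n m k < phi_k n m V k a" and "phi_k n m V k a < 1"
  shows "nu_plus n m V k a \<in> \<real> \<and> 0 < Re (nu_plus n m V k a)"
    and "nu_minus n m V k a \<in> \<real> \<and> 0 < Re (nu_minus n m V k a)"
proof -
  have "0 < (alpha_k n m k)^2 * (1 - phi_k n m V k a)"
    using assms(1,4) by simp
  moreover have "(alpha_k n m k)^2 * (1 - phi_k n m V k a) < (beta_k n m k)^2"
    using assms(3) unfolding gamma_k_def less_one_minus_ratio_sq_iff(2)[OF assms(1)] .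
  ultimately show "nu_plus n m V k a \<in> \<real> \<and> 0 < Re (nu_plus n m V k a)"
    and "nu_minus n m V k a \<in> \<real> \<and> 0 < Re (nu_minus n m V k a)"
    unfolding nu_plus_def nu_minus_def using plus_minus_csqrt_real_pos assms(2) by blast+
qed

theorem lemma1:
  fixes n m k :: nat and a :: real and V :: "real \<Rightarrow> real"
  assumes "n \<ge> 3"
    and "real m \<le> real n / 2" and "real m \<noteq> real n / 4"
    and "a > 0"
    and "\<forall>j x. (deriv ^^ j) V differentiable (at x)"
    and "1 \<le> k" and "k \<le> n - 1"
  shows "(\<forall>z::complex^2. Im (z $ 1) = 0 \<and> Re (z $ 2) = 0 \<longrightarrow>
            (let w = iJB n m V k a *v z in Im (w $ 1) = 0 \<and> Re (w $ 2) = 0))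
    \<and> linear (restr_map (iJB n m V k a))
    \<and> eigenvalues2 (matrix (restr_map (iJB n m V k a)))
        = {nu_plus n m V k a, nu_minus n m V k a}
    \<and> (phi_k n m V k a < gamma_k n m k \<longrightarrow>
         nu_plus n m V k a \<in> \<real> \<and> 0 < Re (nu_plus n m V k a))
    \<and> (real k < real n / 2 \<and> gamma_k n m k < phi_k n m V k a \<and> phi_k n m V k a < 1 \<longrightarrow>
         nu_plus n m V k a \<in> \<real> \<and> 0 < Re (nu_plus n m V k a) \<and>
         nu_minus n m V k a \<in> \<real> \<and> 0 < Re (nu_minus n m V k a))"
proof -
  have alpha: "alpha_k n m k \<noteq> 0"
    using assms(1-3,6,7) by (intro alpha_k_nonzero) auto
  have beta: "0 \<le> beta_k n m k" if "real k < real n / 2"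
    using that assms(1,2) by (intro beta_k_nonneg) auto
  show ?thesis
    using iJB_preserves_real_times_imaginary linear_restr_map_iJB
      eigenvalues2_restr_map_iJB[OF alpha] nu_plus_real_pos[OF alpha]
      nu_plus_nu_minus_real_pos[OF alpha beta]
    unfolding Let_def by blast
qed

end
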